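(* Let $A\subset\mathbb{N}\setminus\{1\}$. If $L(A)$ is lineable, then there exists an integer $k\ge1$ such that $A\cap(A-k)$ is infinite, where $A-k=\{a-k: a\in A\}$.
   Context: $\ell^\infty$ is the space of bounded real sequences with the sup norm. For $x\in\ell^\infty$, $L_x$ denotes the set of accumulation points (subsequential limits) of $x$. For a set $A$ of cardinalities, $L(A)=\{x\in\ell^\infty: |L_x|\in A\}$. A subset $Y$ of a vector space is lineable if $Y\cup\{0\}$ contains an infinite-dimensional linear subspace. *)

theory Defs
  imports Complex_Main
begin

definition linf :: "(nat \<Rightarrow> real) set" where
  "linf = {x. \<exists>B. \<forall>n. \<bar>x n\<bar> \<le> B}"

definition acc_pts :: "(nat \<Rightarrow> real) \<Rightarrow> real set" where
  "acc_pts x = {l. \<exists>r. strict_mono r \<and> (x \<circ> r) \<longlonglongrightarrow> l}"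

definition LA :: "nat set \<Rightarrow> (nat \<Rightarrow> real) set" where
  "LA A = {x \<in> linf. finite (acc_pts x) \<and> card (acc_pts x) \<in> A}"

definition seq_subspace :: "(nat \<Rightarrow> real) set \<Rightarrow> bool" where
  "seq_subspace V \<longleftrightarrow> (\<lambda>n. 0) \<in> V \<and>
     (\<forall>x\<in>V. \<forall>y\<in>V. (\<lambda>n. x n + y n) \<in> V) \<and>
     (\<forall>c. \<forall>x\<in>V. (\<lambda>n. c * x n) \<in> V)"

definition seq_lin_indep :: "(nat \<Rightarrow> real) set \<Rightarrow> bool" where
  "seq_lin_indep S \<longleftrightarrow> (\<forall>T c. finite T \<longrightarrow> T \<subseteq> S \<longrightarrow>
     (\<lambda>n. \<Sum>v\<in>T. c v * v n) = (\<lambda>n. 0) \<longrightarrow> (\<forall>v\<in>T. c v = 0))"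

definition seq_inf_dim :: "(nat \<Rightarrow> real) set \<Rightarrow> bool" where
  "seq_inf_dim V \<longleftrightarrow> (\<exists>S. S \<subseteq> V \<and> infinite S \<and> seq_lin_indep S)"

definition lineable :: "(nat \<Rightarrow> real) set \<Rightarrow> bool" where
  "lineable Y \<longleftrightarrow> (\<exists>V. seq_subspace V \<and> seq_inf_dim V \<and> V \<subseteq> Y \<union> {\<lambda>n. 0})"

end

theory Submission
  imports Defs "HOL-Analysis.Analysis"
begin

(* Let V be an infinite-dimensional subspace of L(A) \<union> {0}. The pairs of joint subsequential limits
   of two bounded sequences x, y form a finite set J(x, y) of points in the plane, and the
   accumulation points of t x + y are the images of J(x, y) under (s, z) \<mapsto> t s + z.

   First, the number of accumulation points is unbounded on V. Otherwise pick w \<in> V with the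
   maximal number M of them. For generic t the map (s, z) \<mapsto> t s + z is injective on J(w, y), so
   maximality forces J(w, y) to be the graph of a function of the first coordinate; this function
   depends linearly on y. Among M + 1 independent elements of V some nonzero combination u then
   has 0 as its only accumulation point, impossible because 1 \<notin> A.

   Now fix a nonzero x \<in> V with m accumulation points and y \<in> V with very many, and let
   J = J(x, y). A generic t x + y has |J| accumulation points; taking t to be the largest slope
   between points of J merges at least one pair of them but loses at most 2m. Both counts lie in
   A, so A contains arbitrarily large pairs at distance between 1 and 2m, and one of these finitely
   many distances occurs infinitely often. *)

lemma linf_comp: "x \<in> linf \<Longrightarrow> x \<circ> r \<in> linf"
  unfolding linf_def by auto

lemma linf_convergent_subseq:
  assumes "x \<in> linf"
  obtains r l where "strict_mono r" "(x \<circ> r) \<longlonglongrightarrow> l"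
proof -
  have "bounded (range x)"
    using assms unfolding linf_def bounded_iff by (auto simp: real_norm_def)
  then show ?thesis
    using bounded_imp_convergent_subsequence that by blast
qed

lemma linf_common_convergent_subseq:
  fixes r0 :: "nat \<Rightarrow> nat"
  assumes "finite T" "T \<subseteq> linf"
  shows "\<exists>r a. strict_mono r \<and> (\<forall>x\<in>T. (x \<circ> r0 \<circ> r) \<longlonglongrightarrow> a x)"
  using assms
proof (induction T rule: finite_induct)
  case empty
  show ?case using strict_mono_id by blast
next
  case (insert y T)
  have "T \<subseteq> linf" using insert.prems by simp
  then obtain r a where r: "strict_mono r" and lim: "\<forall>x\<in>T. (x \<circ> r0 \<circ> r) \<longlonglongrightarrow> a x"
    using insert.IH by blast
  obtain r' l where r': "strict_mono r'" and l: "(y \<circ> r0 \<circ> r \<circ> r') \<longlonglongrightarrow> l"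
    using linf_convergent_subseq[OF linf_comp[OF linf_comp]] insert.prems by blast
  have "(x \<circ> r0 \<circ> (r \<circ> r')) \<longlonglongrightarrow> (a(y := l)) x" if "x \<in> insert y T" for x
  proof (cases "x = y")
    case True
    then show ?thesis using l by (simp add: o_assoc)
  next
    case False
    then show ?thesis
      using that LIMSEQ_subseq_LIMSEQ[OF bspec[OF lim] r'] by (simp add: o_assoc)
  qed
  then have "strict_mono (r \<circ> r') \<and> (\<forall>x\<in>insert y T. (x \<circ> r0 \<circ> (r \<circ> r')) \<longlonglongrightarrow> (a(y := l)) x)"
    using strict_mono_o[OF r r'] by blast
  then show ?case
    by blast
qed

lemma acc_pts_nonempty: "x \<in> linf \<Longrightarrow> acc_pts x \<noteq> {}"
  unfolding acc_pts_def by (erule linf_convergent_subseq) blast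

lemma acc_pts_const: "acc_pts (\<lambda>n. c) = {c}"
proof -
  have "((\<lambda>n. c) \<circ> r) = (\<lambda>n. c)" for r :: "nat \<Rightarrow> nat"
    by auto
  then show ?thesis
    unfolding acc_pts_def using strict_mono_id[where 'a=nat] by (auto simp: LIMSEQ_const_iff)
qed

definition joint_acc_pts :: "(nat \<Rightarrow> real) \<Rightarrow> (nat \<Rightarrow> real) \<Rightarrow> (real \<times> real) set" where
  "joint_acc_pts x y = {(s, z). \<exists>r. strict_mono r \<and> (x \<circ> r) \<longlonglongrightarrow> s \<and> (y \<circ> r) \<longlonglongrightarrow> z}"

lemma joint_acc_pts_subset: "joint_acc_pts x y \<subseteq> acc_pts x \<times> acc_pts y"
  unfolding joint_acc_pts_def acc_pts_def by auto

lemma finite_joint_acc_pts: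
  "finite (acc_pts x) \<Longrightarrow> finite (acc_pts y) \<Longrightarrow> finite (joint_acc_pts x y)"
  by (rule finite_subset[OF joint_acc_pts_subset]) simp

lemma joint_acc_pts_sum:
  assumes "(s, z) \<in> joint_acc_pts w (\<lambda>n. \<Sum>v\<in>T. c v * v n)" "finite T" "T \<subseteq> linf"
  shows "\<exists>a. (\<forall>v\<in>T. (s, a v) \<in> joint_acc_pts w v) \<and> z = (\<Sum>v\<in>T. c v * a v)"
proof -
  obtain r where r: "strict_mono r" "(w \<circ> r) \<longlonglongrightarrow> s" "((\<lambda>n. \<Sum>v\<in>T. c v * v n) \<circ> r) \<longlonglongrightarrow> z"
    using assms(1) unfolding joint_acc_pts_def by blast
  obtain r' a where r': "strict_mono r'" and lim: "\<forall>v\<in>T. (v \<circ> r \<circ> r') \<longlonglongrightarrow> a v"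
    using linf_common_convergent_subseq[OF assms(2,3)] by blast
  have w_lim: "(w \<circ> (r \<circ> r')) \<longlonglongrightarrow> s"
    using LIMSEQ_subseq_LIMSEQ[OF r(2) r'] by (simp add: o_assoc)
  have "((\<lambda>n. \<Sum>v\<in>T. c v * v n) \<circ> (r \<circ> r')) \<longlonglongrightarrow> z"
    using LIMSEQ_subseq_LIMSEQ[OF r(3) r'] by (simp add: o_assoc)
  moreover have "((\<lambda>n. \<Sum>v\<in>T. c v * v n) \<circ> (r \<circ> r')) \<longlonglongrightarrow> (\<Sum>v\<in>T. c v * a v)"
    using lim by (auto simp: o_def intro!: tendsto_sum tendsto_mult_left)
  ultimately have "z = (\<Sum>v\<in>T. c v * a v)"
    using LIMSEQ_unique by blast
  moreover have "(s, a v) \<in> joint_acc_pts w v" if "v \<in> T" for v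
    unfolding joint_acc_pts_def using strict_mono_o[OF r(1) r'] w_lim lim that
    by (auto simp: o_assoc)
  ultimately show ?thesis by blast
qed

lemma acc_pts_lincomb:
  assumes "x \<in> linf" "y \<in> linf"
  shows "acc_pts (\<lambda>n. a * x n + b * y n) = (\<lambda>(s, z). a * s + b * z) ` joint_acc_pts x y"
proof (intro antisym subsetI)
  fix l assume "l \<in> acc_pts (\<lambda>n. a * x n + b * y n)"
  then obtain r where r: "strict_mono r" "((\<lambda>n. a * x n + b * y n) \<circ> r) \<longlonglongrightarrow> l"
    unfolding acc_pts_def by blast
  have "\<exists>r' c. strict_mono r' \<and> (\<forall>v\<in>{x, y}. (v \<circ> r \<circ> r') \<longlonglongrightarrow> c v)"
    using assms by (intro linf_common_convergent_subseq) auto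
  then obtain r' c where r': "strict_mono r'" and lim: "\<forall>v\<in>{x, y}. (v \<circ> r \<circ> r') \<longlonglongrightarrow> c v"
    by blast
  have "((\<lambda>n. a * x n + b * y n) \<circ> (r \<circ> r')) \<longlonglongrightarrow> l"
    using LIMSEQ_subseq_LIMSEQ[OF r(2) r'] by (simp add: o_assoc)
  moreover have "((\<lambda>n. a * x n + b * y n) \<circ> (r \<circ> r')) \<longlonglongrightarrow> a * c x + b * c y"
    using lim by (auto simp: o_def intro!: tendsto_add tendsto_mult_left)
  ultimately have "l = a * c x + b * c y"
    using LIMSEQ_unique by blast
  moreover have "(c x, c y) \<in> joint_acc_pts x y"
    unfolding joint_acc_pts_def using strict_mono_o[OF r(1) r'] lim by (auto simp: o_assoc)
  ultimately show "l \<in> (\<lambda>(s, z). a * s + b * z) ` joint_acc_pts x y"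
    by force
next
  fix l assume "l \<in> (\<lambda>(s, z). a * s + b * z) ` joint_acc_pts x y"
  then obtain s z r where l: "l = a * s + b * z" and r: "strict_mono r"
    and lim: "(x \<circ> r) \<longlonglongrightarrow> s" "(y \<circ> r) \<longlonglongrightarrow> z"
    unfolding joint_acc_pts_def by auto
  have "((\<lambda>n. a * x n + b * y n) \<circ> r) \<longlonglongrightarrow> l"
    unfolding l using tendsto_add[OF tendsto_mult_left[OF lim(1)] tendsto_mult_left[OF lim(2)]]
    by (simp add: o_def)
  then show "l \<in> acc_pts (\<lambda>n. a * x n + b * y n)"
    unfolding acc_pts_def using r by blast
qed

lemma acc_pts_eq_fst_image: "x \<in> linf \<Longrightarrow> y \<in> linf \<Longrightarrow> acc_pts x = fst ` joint_acc_pts x y"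
  using acc_pts_lincomb[of x y 1 0] by (simp add: split_def)

lemma acc_pts_eq_snd_image: "x \<in> linf \<Longrightarrow> y \<in> linf \<Longrightarrow> acc_pts y = snd ` joint_acc_pts x y"
  using acc_pts_lincomb[of x y 0 1] by (simp add: split_def)

definition lin_form :: "real \<Rightarrow> real \<times> real \<Rightarrow> real" where
  "lin_form t p = t * fst p + snd p"

lemma acc_pts_lin_form:
  "x \<in> linf \<Longrightarrow> y \<in> linf \<Longrightarrow> acc_pts (\<lambda>n. t * x n + y n) = lin_form t ` joint_acc_pts x y"
  using acc_pts_lincomb[of x y t 1] by (simp add: lin_form_def split_def)

lemma exists_inj_on_lin_form:
  assumes "finite J"
  obtains t where "inj_on (lin_form t) J"
proof -
  let ?slopes = "(\<lambda>(p, q). (snd q - snd p) / (fst p - fst q)) ` (J \<times> J)"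
  have "finite ?slopes"
    using assms by simp
  then obtain t where t: "t \<notin> ?slopes"
    using ex_new_if_finite[OF infinite_UNIV_char_0] by blast
  have "p = q" if "p \<in> J" "q \<in> J" "lin_form t p = lin_form t q" for p q
  proof (cases "fst p = fst q")
    case True
    then show ?thesis using that(3) by (simp add: lin_form_def prod_eq_iff)
  next
    case False
    then have "t = (snd q - snd p) / (fst p - fst q)"
      using that(3) by (simp add: lin_form_def field_simps)
    then show ?thesis using t that(1,2) by force
  qed
  then show ?thesis by (intro that inj_onI) blast
qed

lemma card_le_card_image_add_card_collisions:
  assumes "finite J"
  shows "card J \<le> card (v ` J) + card {p \<in> J. \<exists>q \<in> J. q \<noteq> p \<and> v q = v p}"
    (is "_ \<le> _ + card ?C")
proof -
  have "inj_on v (J - ?C)"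
    by (rule inj_onI) blast
  then have "card (J - ?C) \<le> card (v ` J)"
    using assms by (intro card_inj_on_le) auto
  moreover have "card (J - ?C) = card J - card ?C"
    using assms by (intro card_Diff_subset) auto
  ultimately show ?thesis
    by linarith
qed

(* A point sharing its v-value with another point is v-minimal or v-maximal in its fibre of f,
   and each fibre has at most one point of either kind. *)
lemma card_le_card_image_add_twice_card_fibres:
  fixes f :: "'a \<Rightarrow> 'b::linorder" and v :: "'a \<Rightarrow> 'c::linorder"
  assumes "finite J"
    and fibre_inj: "\<And>p q. p \<in> J \<Longrightarrow> q \<in> J \<Longrightarrow> f p = f q \<Longrightarrow> v p = v q \<Longrightarrow> p = q"
    and mono: "\<And>p q. p \<in> J \<Longrightarrow> q \<in> J \<Longrightarrow> f p < f q \<Longrightarrow> v p \<le> v q"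
  shows "card J \<le> card (v ` J) + 2 * card (f ` J)"
proof -
  define C where "C = {p \<in> J. \<exists>q \<in> J. q \<noteq> p \<and> v q = v p}"
  define Mn where "Mn = {p \<in> J. \<forall>q \<in> J. f q = f p \<longrightarrow> v p \<le> v q}"
  define Mx where "Mx = {p \<in> J. \<forall>q \<in> J. f q = f p \<longrightarrow> v q \<le> v p}"
  have "C \<subseteq> Mn \<union> Mx"
  proof
    fix p assume "p \<in> C"
    then obtain q where q: "p \<in> J" "q \<in> J" "q \<noteq> p" "v q = v p"
      unfolding C_def by blast
    have "f p \<noteq> f q"
      using fibre_inj q by metis
    then consider "f q < f p" | "f p < f q"
      by fastforce
    then show "p \<in> Mn \<union> Mx"
    proof cases
      case 1
      then have "p \<in> Mn"
        unfolding Mn_def using q mono[of q] by auto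
      then show ?thesis by blast
    next
      case 2
      then have "p \<in> Mx"
        unfolding Mx_def using q mono[of _ q] by auto
      then show ?thesis by blast
    qed
  qed
  have "inj_on f Mn" "inj_on f Mx"
    by (auto intro!: inj_onI simp: Mn_def Mx_def) (meson fibre_inj order.antisym order.refl)+
  moreover have "Mn \<subseteq> J" "Mx \<subseteq> J"
    unfolding Mn_def Mx_def by auto
  ultimately have "card Mn \<le> card (f ` J)" "card Mx \<le> card (f ` J)"
    using card_inj_on_le assms(1) by (metis finite_imageI image_mono)+
  moreover have "card C \<le> card Mn + card Mx"
  proof -
    have "finite (Mn \<union> Mx)"
      using \<open>Mn \<subseteq> J\<close> \<open>Mx \<subseteq> J\<close> assms(1) finite_subset by blast
    then have "card C \<le> card (Mn \<union> Mx)"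
      using \<open>C \<subseteq> Mn \<union> Mx\<close> by (rule card_mono)
    also have "\<dots> \<le> card Mn + card Mx"
      by (rule card_Un_le)
    finally show ?thesis .
  qed
  ultimately show ?thesis
    using card_le_card_image_add_card_collisions[OF assms(1), of v] unfolding C_def by linarith
qed

(* With t the largest slope between points of J, lin_form t merges the two points realising that
   slope and is weakly increasing in the first coordinate. *)
lemma exists_collapsing_lin_form:
  assumes "finite J" "p0 \<in> J" "q0 \<in> J" "fst p0 \<noteq> fst q0"
  obtains t where "card (lin_form t ` J) < card J"
    and "card J \<le> card (lin_form t ` J) + 2 * card (fst ` J)"
proof -
  define S where "S = {(snd q - snd p) / (fst p - fst q) | p q. p \<in> J \<and> q \<in> J \<and> fst p \<noteq> fst q}"
  have "S \<subseteq> (\<lambda>(p, q). (snd q - snd p) / (fst p - fst q)) ` (J \<times> J)"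
    unfolding S_def by force
  then have "finite S"
    using assms(1) finite_subset by blast
  have "S \<noteq> {}"
    unfolding S_def using assms(2-4) by blast
  define t where "t = Max S"
  have mono: "lin_form t q \<le> lin_form t p" if "p \<in> J" "q \<in> J" "fst q < fst p" for p q
  proof -
    have "(snd q - snd p) / (fst p - fst q) \<in> S"
      unfolding S_def using that by force
    then have "(snd q - snd p) / (fst p - fst q) \<le> t"
      unfolding t_def using \<open>finite S\<close> by simp
    then show ?thesis
      using that(3) by (simp add: lin_form_def divide_le_eq algebra_simps)
  qed
  obtain p q where pq: "p \<in> J" "q \<in> J" "fst p \<noteq> fst q" "t = (snd q - snd p) / (fst p - fst q)"
    using Max_in[OF \<open>finite S\<close> \<open>S \<noteq> {}\<close>] unfolding t_def S_def by blast
  then have "lin_form t p = lin_form t q" "p \<noteq> q"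
    by (auto simp: lin_form_def field_simps)
  then have "\<not> inj_on (lin_form t) J"
    using pq(1,2) by (auto dest: inj_onD)
  then have "card (lin_form t ` J) < card J"
    using card_image_le[OF assms(1)] inj_on_iff_eq_card[OF assms(1)] le_neq_implies_less by blast
  moreover have "card J \<le> card (lin_form t ` J) + 2 * card (fst ` J)"
  proof (rule card_le_card_image_add_twice_card_fibres[OF assms(1)])
    fix p q assume "fst p = fst q" "lin_form t p = lin_form t q"
    then show "p = q" by (simp add: lin_form_def prod_eq_iff)
  next
    fix p q assume "p \<in> J" "q \<in> J" "fst p < fst q"
    then show "lin_form t p \<le> lin_form t q" using mono by blast
  qed
  ultimately show ?thesis using that by blast
qed

(* Meaningful only where joint_acc_pts w v is the graph of a function of the first coordinate. *)
definition limit_along :: "(nat \<Rightarrow> real) \<Rightarrow> (nat \<Rightarrow> real) \<Rightarrow> real \<Rightarrow> real" where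
  "limit_along w v s = (THE z. (s, z) \<in> joint_acc_pts w v)"

lemma limit_along_eq:
  assumes "inj_on fst (joint_acc_pts w v)" "(s, z) \<in> joint_acc_pts w v"
  shows "limit_along w v s = z"
  unfolding limit_along_def
proof (rule the_equality)
  show "z' = z" if "(s, z') \<in> joint_acc_pts w v" for z'
    using inj_onD[OF assms(1) _ that assms(2)] by simp
qed (fact assms(2))

lemma acc_pts_sum_subset_image_limit_along:
  assumes "finite T" "T \<subseteq> linf" "w \<in> linf" "(\<lambda>n. \<Sum>v\<in>T. c v * v n) \<in> linf"
    and "\<And>v. v \<in> T \<Longrightarrow> inj_on fst (joint_acc_pts w v)"
  shows "acc_pts (\<lambda>n. \<Sum>v\<in>T. c v * v n) \<subseteq> (\<lambda>s. \<Sum>v\<in>T. c v * limit_along w v s) ` acc_pts w"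
proof
  fix l assume "l \<in> acc_pts (\<lambda>n. \<Sum>v\<in>T. c v * v n)"
  then obtain s where sl: "(s, l) \<in> joint_acc_pts w (\<lambda>n. \<Sum>v\<in>T. c v * v n)"
    using acc_pts_eq_snd_image[OF assms(3,4)] by force
  then have "s \<in> acc_pts w"
    using joint_acc_pts_subset by blast
  obtain a where a: "\<forall>v\<in>T. (s, a v) \<in> joint_acc_pts w v" and l: "l = (\<Sum>v\<in>T. c v * a v)"
    using joint_acc_pts_sum[OF sl assms(1,2)] by blast
  have "l = (\<Sum>v\<in>T. c v * limit_along w v s)"
    unfolding l using a assms(5) limit_along_eq by (intro sum.cong) auto
  then show "l \<in> (\<lambda>s. \<Sum>v\<in>T. c v * limit_along w v s) ` acc_pts w"
    using \<open>s \<in> acc_pts w\<close> by blast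
qed

(* No condition on the pivot G v0 s0: if it vanishes, both sides agree because x / 0 = 0. *)
lemma sum_pivot_update:
  fixes G :: "'a \<Rightarrow> 'b \<Rightarrow> 'c::field"
  assumes "finite T" "v0 \<in> T"
  shows "(\<Sum>v\<in>T. (c(v0 := - (\<Sum>v\<in>T - {v0}. c v * G v s0) / G v0 s0)) v * G v s)
    = (\<Sum>v\<in>T - {v0}. c v * (G v s - G v s0 / G v0 s0 * G v0 s))"
proof -
  have "(\<Sum>v\<in>T - {v0}. (c(v0 := a)) v * G v s) = (\<Sum>v\<in>T - {v0}. c v * G v s)" for a
    by (rule sum.cong) auto
  then show ?thesis
    using sum.remove[OF assms, of "\<lambda>v. (c(v0 := _)) v * G v s"]
    by (simp add: right_diff_distrib sum_subtractf sum_distrib_right sum_divide_distrib mult.assoc)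
qed

lemma homogeneous_system_nontrivial_solution:
  fixes G :: "'a \<Rightarrow> 'b \<Rightarrow> 'c::field"
  assumes "finite K" "finite T" "card K < card T"
  shows "\<exists>c. (\<exists>v\<in>T. c v \<noteq> 0) \<and> (\<forall>s\<in>K. (\<Sum>v\<in>T. c v * G v s) = 0)"
  using assms
proof (induction K arbitrary: T G rule: finite_induct)
  case empty
  then obtain v0 where "v0 \<in> T"
    by fastforce
  then show ?case
    by (intro exI[of _ "\<lambda>v. if v = v0 then 1 else 0"]) auto
next
  case (insert s0 K)
  show ?case
  proof (cases "\<forall>v\<in>T. G v s0 = 0")
    case True
    then show ?thesis
      using insert.IH[of T G] insert.prems insert.hyps by auto
  next
    case False
    then obtain v0 where v0: "v0 \<in> T" "G v0 s0 \<noteq> 0"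
      by blast
    \<comment> \<open>Gaussian elimination of the equation at \<open>s0\<close> with pivot \<open>v0\<close>\<close>
    define G' where "G' v s = G v s - G v s0 / G v0 s0 * G v0 s" for v s
    have "card K < card (T - {v0})"
      using insert v0(1) by auto
    then obtain c where c_nz: "\<exists>v\<in>T - {v0}. c v \<noteq> 0"
      and c_sol: "\<forall>s\<in>K. (\<Sum>v\<in>T - {v0}. c v * G' v s) = 0"
      using insert.IH[of "T - {v0}" G'] insert.prems(1) by auto
    define a where "a = - (\<Sum>v\<in>T - {v0}. c v * G v s0) / G v0 s0"
    have "(\<Sum>v\<in>T. (c(v0 := a)) v * G v s) = 0" if "s \<in> insert s0 K" for s
    proof -
      have "(\<Sum>v\<in>T. (c(v0 := a)) v * G v s) = (\<Sum>v\<in>T - {v0}. c v * G' v s)"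
        unfolding a_def G'_def by (rule sum_pivot_update[OF insert.prems(1) v0(1)])
      also have "\<dots> = 0"
        using that c_sol v0(2) by (auto simp: G'_def)
      finally show ?thesis .
    qed
    moreover have "\<exists>v\<in>T. (c(v0 := a)) v \<noteq> 0"
      using c_nz by auto
    ultimately show ?thesis
      by blast
  qed
qed

lemma seq_subspace_lincomb:
  assumes "seq_subspace V" "x \<in> V" "y \<in> V"
  shows "(\<lambda>n. a * x n + b * y n) \<in> V"
proof -
  have "(\<lambda>n. a * x n) \<in> V" "(\<lambda>n. b * y n) \<in> V"
    using assms unfolding seq_subspace_def by auto
  then show ?thesis
    using assms(1) unfolding seq_subspace_def by auto
qed

lemma seq_subspace_sum:
  assumes "seq_subspace V" "finite T" "T \<subseteq> V"
  shows "(\<lambda>n. \<Sum>v\<in>T. c v * v n) \<in> V"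
  using assms(2,3)
proof (induction T rule: finite_induct)
  case empty
  then show ?case
    using assms(1) by (simp add: seq_subspace_def)
next
  case (insert v T)
  then show ?case
    using seq_subspace_lincomb[OF assms(1), of v "\<lambda>n. \<Sum>v\<in>T. c v * v n" "c v" 1] by simp
qed

lemma seq_inf_dim_imp_nonzero:
  assumes "seq_inf_dim V"
  obtains x where "x \<in> V" "x \<noteq> (\<lambda>n. 0)"
proof -
  obtain S where "S \<subseteq> V" "infinite S" "seq_lin_indep S"
    using assms unfolding seq_inf_dim_def by blast
  moreover obtain x where "x \<in> S"
    using \<open>infinite S\<close> by (metis finite.emptyI ex_in_conv)
  ultimately have "x \<in> V" "x \<noteq> (\<lambda>n. 0)"
    unfolding seq_lin_indep_def by (force dest: spec[of _ "{x}"] spec[of _ "\<lambda>_. 1"])+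
  then show ?thesis
    using that by blast
qed

lemma infinite_inter_shift_if_close_pairs:
  fixes A :: "nat set"
  assumes "\<And>B. \<exists>n k. B < n \<and> 1 \<le> k \<and> k \<le> d \<and> n \<in> A \<and> n + k \<in> A"
  shows "\<exists>k. k \<ge> 1 \<and> infinite (A \<inter> {n. n + k \<in> A})"
proof -
  have "infinite (\<Union>k\<in>{1..d}. A \<inter> {n. n + k \<in> A})"
    unfolding infinite_nat_iff_unbounded using assms by fastforce
  then obtain k where "k \<in> {1..d}" "infinite (A \<inter> {n. n + k \<in> A})"
    using finite_UN[OF finite_atLeastAtMost] by blast
  then show ?thesis
    by auto
qed

locale subspace_in_LA =
  fixes A :: "nat set" and V :: "(nat \<Rightarrow> real) set"
  assumes subspace: "seq_subspace V"
    and subset_LA: "V \<subseteq> LA A \<union> {\<lambda>n. 0}"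
    and one_notin_A: "1 \<notin> A"
begin

lemma zero_mem: "(\<lambda>n. 0) \<in> V"
  using subspace unfolding seq_subspace_def by blast

lemma mem_linf: "y \<in> V \<Longrightarrow> y \<in> linf"
  using subset_LA unfolding LA_def linf_def by auto

lemma finite_acc_pts: "y \<in> V \<Longrightarrow> finite (acc_pts y)"
  using subset_LA acc_pts_const[of 0] unfolding LA_def by auto

lemma card_acc_pts_mem:
  assumes "y \<in> V" "1 < card (acc_pts y)"
  shows "card (acc_pts y) \<in> A"
  using assms subset_LA acc_pts_const[of 0] unfolding LA_def by auto

lemma two_le_card_acc_pts:
  assumes "y \<in> V" "y \<noteq> (\<lambda>n. 0)"
  shows "2 \<le> card (acc_pts y)"
proof -
  have "card (acc_pts y) \<in> A"
    using assms subset_LA unfolding LA_def by auto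
  then have "card (acc_pts y) \<noteq> 1"
    using one_notin_A by auto
  moreover have "card (acc_pts y) \<noteq> 0"
    using finite_acc_pts acc_pts_nonempty mem_linf assms(1) by simp
  ultimately show ?thesis
    by linarith
qed

lemma finite_joint_acc_pts_mem:
  "x \<in> V \<Longrightarrow> y \<in> V \<Longrightarrow> finite (joint_acc_pts x y)"
  by (simp add: finite_acc_pts finite_joint_acc_pts)

lemma card_lin_form_image_mem:
  assumes "x \<in> V" "y \<in> V" "1 < card (lin_form t ` joint_acc_pts x y)"
  shows "card (lin_form t ` joint_acc_pts x y) \<in> A"
proof -
  have mem: "(\<lambda>n. t * x n + y n) \<in> V"
    using seq_subspace_lincomb[OF subspace assms(1,2), of t 1] by simp
  have "acc_pts (\<lambda>n. t * x n + y n) = lin_form t ` joint_acc_pts x y"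
    using acc_pts_lin_form[OF mem_linf mem_linf, OF assms(1,2)] .
  then show ?thesis
    using card_acc_pts_mem[OF mem] assms(3) by simp
qed

lemma card_joint_acc_pts_mem:
  assumes "x \<in> V" "y \<in> V" "1 < card (joint_acc_pts x y)"
  shows "card (joint_acc_pts x y) \<in> A"
proof -
  obtain t where "inj_on (lin_form t) (joint_acc_pts x y)"
    using exists_inj_on_lin_form[OF finite_joint_acc_pts_mem[OF assms(1,2)]] .
  then show ?thesis
    using card_lin_form_image_mem[OF assms(1,2), of t] assms(3) by (simp add: card_image)
qed

lemma inj_on_fst_joint_acc_pts:
  assumes "w \<in> V" "\<And>y. y \<in> V \<Longrightarrow> card (acc_pts y) \<le> card (acc_pts w)" "y \<in> V"
  shows "inj_on fst (joint_acc_pts w y)"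
proof -
  let ?J = "joint_acc_pts w y"
  have fin: "finite ?J"
    using finite_joint_acc_pts_mem assms(1,3) .
  obtain t where t: "inj_on (lin_form t) ?J"
    using exists_inj_on_lin_form[OF fin] .
  have "card ?J = card (acc_pts (\<lambda>n. t * w n + 1 * y n))"
    using acc_pts_lin_form[OF mem_linf mem_linf, OF assms(1,3)] card_image[OF t] by simp
  also have "\<dots> \<le> card (acc_pts w)"
    using assms(2) seq_subspace_lincomb[OF subspace assms(1,3)] by blast
  also have "\<dots> = card (fst ` ?J)"
    using acc_pts_eq_fst_image[OF mem_linf mem_linf, OF assms(1,3)] by simp
  finally have "card (fst ` ?J) = card ?J"
    using card_image_le[OF fin, of fst] by linarith
  then show ?thesis
    using inj_on_iff_eq_card[OF fin] by blast
qed

lemma card_acc_pts_unbounded: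
  assumes "seq_inf_dim V"
  shows "\<exists>y\<in>V. B < card (acc_pts y)"
proof (rule ccontr)
  assume "\<not> ?thesis"
  then obtain w where w: "w \<in> V" and w_max: "\<And>y. y \<in> V \<Longrightarrow> card (acc_pts y) \<le> card (acc_pts w)"
    using Lattices_Big.ex_has_greatest_nat[of "\<lambda>y. y \<in> V" "\<lambda>n. 0" "\<lambda>y. card (acc_pts y)" "Suc B"]
      zero_mem by force
  obtain S where "S \<subseteq> V" "infinite S" and indep: "seq_lin_indep S"
    using assms unfolding seq_inf_dim_def by blast
  then obtain T where T: "T \<subseteq> V" "T \<subseteq> S" "finite T" "card T = Suc (card (acc_pts w))"
    by (meson infinite_arbitrarily_large order_trans)
  obtain c where c_nz: "\<exists>v\<in>T. c v \<noteq> 0"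
    and c_sol: "\<forall>s\<in>acc_pts w. (\<Sum>v\<in>T. c v * limit_along w v s) = 0"
    using homogeneous_system_nontrivial_solution[OF finite_acc_pts[OF w] T(3), of "limit_along w"] T(4)
    by auto
  define u where "u = (\<lambda>n. \<Sum>v\<in>T. c v * v n)"
  have "u \<in> V"
    unfolding u_def using seq_subspace_sum[OF subspace T(3,1)] .
  have "acc_pts u \<subseteq> (\<lambda>s. \<Sum>v\<in>T. c v * limit_along w v s) ` acc_pts w"
    unfolding u_def
  proof (rule acc_pts_sum_subset_image_limit_along[OF T(3)])
    show "T \<subseteq> linf" "w \<in> linf" "(\<lambda>n. \<Sum>v\<in>T. c v * v n) \<in> linf"
      using T(1) w \<open>u \<in> V\<close> mem_linf unfolding u_def by blast+
    show "inj_on fst (joint_acc_pts w v)" if "v \<in> T" for v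
      using inj_on_fst_joint_acc_pts[OF w w_max] T(1) that by blast
  qed
  also have "\<dots> \<subseteq> {0}"
    using c_sol by auto
  finally have "card (acc_pts u) \<le> card {0::real}"
    by (rule card_mono[rotated]) simp
  then have "u = (\<lambda>n. 0)"
    using two_le_card_acc_pts[OF \<open>u \<in> V\<close>] by fastforce
  then have "\<forall>v\<in>T. c v = 0"
    using indep T unfolding seq_lin_indep_def u_def by blast
  then show False
    using c_nz by blast
qed

lemma exists_close_pair:
  assumes "seq_inf_dim V" "x \<in> V" "x \<noteq> (\<lambda>n. 0)"
  shows "\<exists>n k. B < n \<and> 1 \<le> k \<and> k \<le> 2 * card (acc_pts x) \<and> n \<in> A \<and> n + k \<in> A"
proof -
  let ?m = "card (acc_pts x)"
  obtain y where y: "y \<in> V" and y_large: "B + 1 + 2 * ?m < card (acc_pts y)"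
    using card_acc_pts_unbounded[OF assms(1)] by blast
  let ?J = "joint_acc_pts x y"
  have fin: "finite ?J"
    using finite_joint_acc_pts_mem[OF assms(2) y] .
  have fst_J: "fst ` ?J = acc_pts x"
    using acc_pts_eq_fst_image[OF mem_linf mem_linf, OF assms(2) y] by simp
  have snd_J: "snd ` ?J = acc_pts y"
    using acc_pts_eq_snd_image[OF mem_linf mem_linf, OF assms(2) y] by simp
  have "card (acc_pts y) \<le> card ?J"
    using card_image_le[OF fin, of snd] snd_J by simp
  have "\<not> card (fst ` ?J) \<le> Suc 0"
    using two_le_card_acc_pts[OF assms(2,3)] fst_J by simp
  then obtain p0 q0 where pq: "p0 \<in> ?J" "q0 \<in> ?J" "fst p0 \<noteq> fst q0"
    using card_le_Suc0_iff_eq[OF finite_imageI[OF fin]] by blast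
  obtain t where t: "card (lin_form t ` ?J) < card ?J"
    "card ?J \<le> card (lin_form t ` ?J) + 2 * ?m"
    using exists_collapsing_lin_form[OF fin pq] unfolding fst_J by blast
  define n where "n = card (lin_form t ` ?J)"
  define k where "k = card ?J - n"
  have "B + 1 < n"
    using t y_large \<open>card (acc_pts y) \<le> card ?J\<close> by (simp add: n_def)
  then have "n \<in> A" "n + k \<in> A"
    using card_lin_form_image_mem[OF assms(2) y] card_joint_acc_pts_mem[OF assms(2) y] t
    by (simp_all add: n_def k_def)
  moreover have "1 \<le> k" "k \<le> 2 * ?m"
    using t by (simp_all add: n_def k_def)
  ultimately show ?thesis
    using \<open>B + 1 < n\<close> by (intro exI[of _ n] exI[of _ k]) simp
qed

end

theorem theorem2p3:
  fixes A :: "nat set"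
  assumes "1 \<notin> A"
    and "lineable (LA A)"
  shows "\<exists>k::nat. k \<ge> 1 \<and> infinite (A \<inter> {n. n + k \<in> A})"
proof -
  obtain V where "seq_subspace V" and dim: "seq_inf_dim V" and "V \<subseteq> LA A \<union> {\<lambda>n. 0}"
    using assms(2) unfolding lineable_def by blast
  then interpret subspace_in_LA A V
    using assms(1) by unfold_locales
  obtain x where "x \<in> V" "x \<noteq> (\<lambda>n. 0)"
    using seq_inf_dim_imp_nonzero[OF dim] .
  then show ?thesis
    using exists_close_pair[OF dim] by (intro infinite_inter_shift_if_close_pairs) blast
qed

end
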